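(* Let $m,n$ be positive integers. Then $\mathrm{RR}(\mathcal{B}_m:\mathcal{B}_n)\leq m\,\mathrm{R}_{2^m-1}(\mathcal{B}_n)+m$.
   Context: $\mathcal{B}_N$ denotes the Boolean lattice of all subsets of $[N]$ ordered by inclusion. An induced copy of a poset $\mathcal{P}$ in a poset $\mathcal{Q}$ is the image of an injection $f:\mathcal{P}\to\mathcal{Q}$ with $f(X)\le f(Y)$ iff $X\le Y$. A colored family is monochromatic if all its sets share a color, rainbow if all its sets have pairwise distinct colors. $\mathrm{R}_k(\mathcal{P})$ is the smallest $n$ such that every coloring of $\mathcal{B}_n$ with $k$ colors contains a monochromatic induced copy of $\mathcal{P}$. The Boolean rainbow Ramsey number $\mathrm{RR}(\mathcal{Q}:\mathcal{P})$ is the smallest $n$ such that every coloring (with any number of colors) of the sets of $\mathcal{B}_n$ contains a rainbow induced copy of $\mathcal{Q}$ or a monochromatic induced copy of $\mathcal{P}$. *)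

theory Defs
  imports Main
begin

definition Bool_lat :: "nat \<Rightarrow> nat set set" where
  "Bool_lat N = Pow {1..N}"

definition induced_copy :: "'a set set \<Rightarrow> 'b set set \<Rightarrow> 'b set set \<Rightarrow> bool" where
  "induced_copy P Q F \<longleftrightarrow>
     (\<exists>f. inj_on f P \<and> f ` P \<subseteq> Q \<and> F = f ` P \<and>
          (\<forall>X\<in>P. \<forall>Y\<in>P. f X \<subseteq> f Y \<longleftrightarrow> X \<subseteq> Y))"

definition monochromatic :: "('b \<Rightarrow> 'c) \<Rightarrow> 'b set \<Rightarrow> bool" where
  "monochromatic col F \<longleftrightarrow> (\<exists>c. \<forall>X\<in>F. col X = c)"

definition rainbow :: "('b \<Rightarrow> 'c) \<Rightarrow> 'b set \<Rightarrow> bool" where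
  "rainbow col F \<longleftrightarrow> inj_on col F"

definition Ramsey_num :: "nat \<Rightarrow> nat set set \<Rightarrow> nat" where
  "Ramsey_num k P = (LEAST n. \<forall>col :: nat set \<Rightarrow> nat.
      (\<forall>X\<in>Bool_lat n. col X < k) \<longrightarrow>
      (\<exists>F. induced_copy P (Bool_lat n) F \<and> monochromatic col F))"

text \<open>RR(Q:P): least n such that every colouring of B_n (with any number of colours;
  since B_n is finite, colours may be taken to be natural numbers) contains a rainbow
  induced copy of Q or a monochromatic induced copy of P.\<close>
definition rainbow_Ramsey_num :: "nat set set \<Rightarrow> nat set set \<Rightarrow> nat" where
  "rainbow_Ramsey_num Q P = (LEAST n. \<forall>col :: nat set \<Rightarrow> nat.
      (\<exists>F. induced_copy Q (Bool_lat n) F \<and> rainbow col F) \<or>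
      (\<exists>F. induced_copy P (Bool_lat n) F \<and> monochromatic col F))"

end

theory Submission
  imports Defs "HOL-Library.FuncSet"
begin

(* Boolean Ramsey numbers exist by induction on n: in B_(a+K), colour B_a once for each layer
   X \<union> {a+1..a+j}, j \<le> K, and take a monochromatic B_n in each layer. With K large enough,
   two layers j < j' carry the same copy in the same colour, and together they form a
   monochromatic B_(n+1).

   For the bound let R = R_(2^m-1)(B_n), N = m R + m, and take a colouring of B_N without a
   monochromatic B_n. The coordinates above m form m blocks of length R. For each nonempty
   A \<subseteq> [m] there is a copy of B_R consisting of sets that meet [m] in A, contain the
   first |A| - 1 blocks and lie in the first |A| blocks; it carries at least 2^m colours.
   So one can choose a set from each of these 2^m - 1 copies such that the chosen sets and the
   empty set all have distinct colours, and the block structure alone forces the chosen sets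
   to form a copy of B_m, which is then rainbow. *)

definition order_embedding :: "'a set set \<Rightarrow> 'b set set \<Rightarrow> ('a set \<Rightarrow> 'b set) \<Rightarrow> bool" where
  "order_embedding P Q f \<longleftrightarrow> f ` P \<subseteq> Q \<and> (\<forall>X\<in>P. \<forall>Y\<in>P. f X \<subseteq> f Y \<longleftrightarrow> X \<subseteq> Y)"

lemma order_embedding_inj_on: "order_embedding P Q f \<Longrightarrow> inj_on f P"
  unfolding order_embedding_def inj_on_def by (metis subset_antisym order_refl)

lemma induced_copy_iff: "induced_copy P Q F \<longleftrightarrow> (\<exists>f. order_embedding P Q f \<and> F = f ` P)"
  unfolding induced_copy_def using order_embedding_inj_on by (auto simp: order_embedding_def)

lemma order_embedding_comp:
  "order_embedding P Q f \<Longrightarrow> order_embedding Q Q' g \<Longrightarrow> order_embedding P Q' (g \<circ> f)"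
  unfolding order_embedding_def by (simp add: image_subset_iff)

lemma order_embedding_id: "order_embedding P P id"
  unfolding order_embedding_def by simp

definition Bool_lat_arrows :: "nat \<Rightarrow> nat \<Rightarrow> nat \<Rightarrow> bool" where
  "Bool_lat_arrows k n N \<longleftrightarrow> (\<forall>col :: nat set \<Rightarrow> nat. (\<forall>X\<in>Bool_lat N. col X < k) \<longrightarrow>
      (\<exists>f. order_embedding (Bool_lat n) (Bool_lat N) f \<and> monochromatic col (f ` Bool_lat n)))"

lemma Ramsey_num_Bool_lat: "Ramsey_num k (Bool_lat n) = (LEAST N. Bool_lat_arrows k n N)"
proof -
  have "(\<exists>F. induced_copy (Bool_lat n) (Bool_lat N) F \<and> monochromatic col F) \<longleftrightarrow>
      (\<exists>f. order_embedding (Bool_lat n) (Bool_lat N) f \<and> monochromatic col (f ` Bool_lat n))"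
    for N and col :: "nat set \<Rightarrow> nat"
    by (auto simp: induced_copy_iff)
  then show ?thesis unfolding Ramsey_num_def Bool_lat_arrows_def by simp
qed

lemma Bool_lat_arrows_0: "Bool_lat_arrows k 0 0"
  unfolding Bool_lat_arrows_def monochromatic_def Bool_lat_def
  using order_embedding_id by fastforce

lemma Un_subset_Un_disjoint_iff:
  assumes "U \<subseteq> A" "V \<subseteq> A" "S \<inter> A = {}" "T \<inter> A = {}"
  shows "U \<union> S \<subseteq> V \<union> T \<longleftrightarrow> U \<subseteq> V \<and> S \<subseteq> T"
  using assms by blast

lemma order_embedding_Bool_lat_Suc:
  assumes g: "order_embedding (Bool_lat n) (Bool_lat a) g"
    and "S \<subset> S'" "S' \<subseteq> {a<..N}"
  shows "order_embedding (Bool_lat (Suc n)) (Bool_lat N)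
           (\<lambda>X. g (X - {Suc n}) \<union> (if Suc n \<in> X then S' else S))"
    (is "order_embedding _ _ ?f")
  unfolding order_embedding_def
proof (intro conjI image_subsetI ballI)
  have lower: "X - {Suc n} \<in> Bool_lat n" if "X \<in> Bool_lat (Suc n)" for X
    using that unfolding Bool_lat_def by (auto simp: le_Suc_eq)
  have g_into: "g X \<subseteq> {1..a}" if "X \<in> Bool_lat n" for X
    using g that unfolding order_embedding_def Bool_lat_def by blast
  obtain x where "x \<in> S'" using \<open>S \<subset> S'\<close> by blast
  then have "a < N" using assms(3) by fastforce
  have top_between: "(if P then S' else S) \<subseteq> {a<..N}" for P
    using assms(2,3) by auto
  fix X Y
  assume X: "X \<in> Bool_lat (Suc n)"
  have "?f X \<subseteq> {1..a} \<union> {a<..N}"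
    using g_into[OF lower[OF X]] top_between by (rule Un_mono)
  also have "\<dots> \<subseteq> {1..N}" using \<open>a < N\<close> by auto
  finally show "?f X \<in> Bool_lat N" unfolding Bool_lat_def by simp
  assume Y: "Y \<in> Bool_lat (Suc n)"
  have disj: "(if P then S' else S) \<inter> {1..a} = {}" for P
    using top_between[of P] by auto
  have "?f X \<subseteq> ?f Y \<longleftrightarrow> g (X - {Suc n}) \<subseteq> g (Y - {Suc n})
      \<and> (if Suc n \<in> X then S' else S) \<subseteq> (if Suc n \<in> Y then S' else S)"
    by (rule Un_subset_Un_disjoint_iff[OF g_into[OF lower[OF X]] g_into[OF lower[OF Y]] disj disj])
  also have "\<dots> \<longleftrightarrow> X - {Suc n} \<subseteq> Y - {Suc n} \<and> (Suc n \<in> X \<longrightarrow> Suc n \<in> Y)"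
    using g lower X Y \<open>S \<subset> S'\<close> unfolding order_embedding_def by auto
  also have "\<dots> \<longleftrightarrow> X \<subseteq> Y" by blast
  finally show "?f X \<subseteq> ?f Y \<longleftrightarrow> X \<subseteq> Y" .
qed

lemma Bool_lat_arrows_monochromatic_Un:
  assumes "Bool_lat_arrows k n a" and "\<And>X. X \<in> Bool_lat a \<Longrightarrow> c (X \<union> S) < k"
  shows "\<exists>g d. order_embedding (Bool_lat n) (Bool_lat a) g \<and> d < k \<and>
           (\<forall>X\<in>Bool_lat n. c (g X \<union> S) = d)"
proof -
  obtain g where g: "order_embedding (Bool_lat n) (Bool_lat a) g"
    and "monochromatic (\<lambda>X. c (X \<union> S)) (g ` Bool_lat n)"
    using assms(1)[unfolded Bool_lat_arrows_def, rule_format, of "\<lambda>X. c (X \<union> S)"] assms(2) by blast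
  then obtain d where d: "\<forall>X\<in>Bool_lat n. c (g X \<union> S) = d"
    unfolding monochromatic_def by auto
  have "{} \<in> Bool_lat n" "g {} \<in> Bool_lat a"
    using g unfolding order_embedding_def Bool_lat_def by auto
  then have "d < k"
    using d assms(2) by metis
  with g d show ?thesis by blast
qed

lemma pigeonhole_atMost_card:
  assumes "finite L" "f ` {..card L} \<subseteq> L"
  shows "\<exists>i j. i < j \<and> j \<le> card L \<and> f i = f j"
proof -
  have "\<not> inj_on f {..card L}"
    using card_inj_on_le[OF _ assms(2,1)] by auto
  then obtain i i' where "i \<le> card L" "i' \<le> card L" "i \<noteq> i'" "f i = f i'"
    unfolding inj_on_def by auto
  then show ?thesis
    by (intro exI[of _ "min i i'"] exI[of _ "max i i'"]) (auto simp: min_def max_def)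
qed

lemma monochromatic_Bool_lat_Suc_of_two_layers:
  assumes g: "order_embedding (Bool_lat n) (Bool_lat a) g"
    and "j < j'" "j' \<le> K"
    and layers: "\<And>X. X \<in> Bool_lat n \<Longrightarrow> c (g X \<union> {a<..a + j}) = d \<and> c (g X \<union> {a<..a + j'}) = d"
  shows "\<exists>f. order_embedding (Bool_lat (Suc n)) (Bool_lat (a + K)) f \<and>
           monochromatic c (f ` Bool_lat (Suc n))"
proof -
  let ?f = "\<lambda>X. g (X - {Suc n}) \<union> (if Suc n \<in> X then {a<..a + j'} else {a<..a + j})"
  have "{a<..a + j} \<subseteq> {a<..a + j'}" "a + j' \<in> {a<..a + j'} - {a<..a + j}"
    using \<open>j < j'\<close> by auto
  then have "{a<..a + j} \<subset> {a<..a + j'}" by blast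
  moreover have "{a<..a + j'} \<subseteq> {a<..a + K}"
    using \<open>j' \<le> K\<close> by auto
  ultimately have "order_embedding (Bool_lat (Suc n)) (Bool_lat (a + K)) ?f"
    by (rule order_embedding_Bool_lat_Suc[OF g])
  moreover have "c (?f X) = d" if "X \<in> Bool_lat (Suc n)" for X
  proof -
    have "X - {Suc n} \<in> Bool_lat n"
      using that unfolding Bool_lat_def by (auto simp: le_Suc_eq)
    then show ?thesis
      using layers[of "X - {Suc n}"] by auto
  qed
  then have "monochromatic c (?f ` Bool_lat (Suc n))"
    unfolding monochromatic_def by auto
  ultimately show ?thesis by blast
qed

lemma Bool_lat_arrows_Suc:
  assumes "Bool_lat_arrows k n a"
  shows "Bool_lat_arrows k (Suc n) (a + card ((Bool_lat n \<rightarrow>\<^sub>E Bool_lat a) \<times> {..<k}))"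
proof -
  define L where "L = (Bool_lat n \<rightarrow>\<^sub>E Bool_lat a) \<times> {..<k}"
  define K where "K = card L"
  have "Bool_lat_arrows k (Suc n) (a + K)"
    unfolding Bool_lat_arrows_def
  proof (intro allI impI)
    fix c :: "nat set \<Rightarrow> nat"
    assume c: "\<forall>X\<in>Bool_lat (a + K). c X < k"
    have "\<exists>g d. order_embedding (Bool_lat n) (Bool_lat a) g \<and> d < k \<and>
        (\<forall>X\<in>Bool_lat n. c (g X \<union> {a<..a + j}) = d)" if "j \<le> K" for j
    proof (rule Bool_lat_arrows_monochromatic_Un[OF assms])
      fix X
      assume "X \<in> Bool_lat a"
      then have "X \<union> {a<..a + j} \<in> Bool_lat (a + K)"
        using \<open>j \<le> K\<close> by (auto simp: Bool_lat_def)
      then show "c (X \<union> {a<..a + j}) < k"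
        using c by blast
    qed
    then obtain G D where GD: "\<And>j. j \<le> K \<Longrightarrow> order_embedding (Bool_lat n) (Bool_lat a) (G j) \<and>
        D j < k \<and> (\<forall>X\<in>Bool_lat n. c (G j X \<union> {a<..a + j}) = D j)"
      by metis
    define lab where "lab j = (restrict (G j) (Bool_lat n), D j)" for j
    have "lab j \<in> L" if "j \<le> K" for j
      using GD[OF that] unfolding lab_def L_def order_embedding_def by auto
    moreover have "finite L"
      unfolding L_def Bool_lat_def by (intro finite_cartesian_product finite_PiE) auto
    ultimately obtain j j' where jj': "j < j'" "j' \<le> K" "lab j = lab j'"
      using pigeonhole_atMost_card[of L lab] unfolding K_def by (auto simp: image_subset_iff)
    then have restr: "restrict (G j') (Bool_lat n) = restrict (G j) (Bool_lat n)" and "D j' = D j"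
      unfolding lab_def by simp_all
    have "G j' X = G j X" if "X \<in> Bool_lat n" for X
      using fun_cong[OF restr, of X] that by simp
    then have layers: "c (G j X \<union> {a<..a + j}) = D j \<and> c (G j X \<union> {a<..a + j'}) = D j"
      if "X \<in> Bool_lat n" for X
      using GD[of j] GD[of j'] jj'(1,2) \<open>D j' = D j\<close> that by simp
    have "order_embedding (Bool_lat n) (Bool_lat a) (G j)"
      using GD jj'(1,2) by simp
    from monochromatic_Bool_lat_Suc_of_two_layers[OF this jj'(1,2) layers]
    show "\<exists>f. order_embedding (Bool_lat (Suc n)) (Bool_lat (a + K)) f \<and>
        monochromatic c (f ` Bool_lat (Suc n))" .
  qed
  then show ?thesis unfolding K_def L_def .
qed

lemma Bool_lat_arrows_exists: "\<exists>N. Bool_lat_arrows k n N"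
proof (induction n)
  case 0
  show ?case using Bool_lat_arrows_0 by blast
next
  case (Suc n)
  then show ?case using Bool_lat_arrows_Suc by blast
qed

lemma Bool_lat_arrows_Ramsey_num: "Bool_lat_arrows k n (Ramsey_num k (Bool_lat n))"
  unfolding Ramsey_num_Bool_lat by (rule LeastI_ex) (rule Bool_lat_arrows_exists)

lemma exists_rainbow_choice:
  fixes c :: "'a \<Rightarrow> 'b" and C :: "'i \<Rightarrow> 'a set"
  assumes "finite I" "finite U" "\<And>i. i \<in> I \<Longrightarrow> card U + card I \<le> card (c ` C i)"
  shows "\<exists>g. (\<forall>i\<in>I. g i \<in> C i \<and> c (g i) \<notin> U) \<and> inj_on (c \<circ> g) I"
  using assms
proof (induction I arbitrary: U rule: finite_induct)
  case empty
  then show ?case by simp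
next
  case (insert i I)
  have "card U + card I \<le> card (c ` C j)" if "j \<in> I" for j
    using insert.prems(2)[of j] insert.hyps that by simp
  then obtain g where g: "\<forall>j\<in>I. g j \<in> C j \<and> c (g j) \<notin> U" "inj_on (c \<circ> g) I"
    using insert.IH[OF insert.prems(1)] by blast
  let ?used = "U \<union> (c \<circ> g) ` I"
  have "card ?used \<le> card U + card I"
    using card_Un_le[of U "(c \<circ> g) ` I"] card_image_le[OF insert.hyps(1), of "c \<circ> g"] by simp
  also have "\<dots> < card (c ` C i)"
    using insert.prems(2)[of i] insert.hyps by simp
  finally obtain x where x: "x \<in> C i" "c x \<notin> ?used"
    using card_mono[of ?used "c ` C i"] insert.prems(1) insert.hyps(1) by fastforce
  define g' where "g' = g(i := x)"
  have agree: "g' j = g j" if "j \<in> I" for j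
    using that insert.hyps(2) unfolding g'_def by auto
  then have "inj_on (c \<circ> g') I"
    using inj_on_cong[of I "c \<circ> g'" "c \<circ> g"] g(2) by simp
  moreover have "c (g' i) \<notin> (c \<circ> g') ` I"
    using x agree unfolding g'_def by auto
  ultimately have "inj_on (c \<circ> g') (insert i I)"
    using insert.hyps(2) by simp
  moreover have "\<forall>j\<in>insert i I. g' j \<in> C j \<and> c (g' j) \<notin> U"
    using g(1) x agree unfolding g'_def by auto
  ultimately show ?case by blast
qed

definition level_block :: "nat \<Rightarrow> nat \<Rightarrow> nat set \<Rightarrow> nat set \<Rightarrow> nat set" where
  "level_block m R A T = A \<union> {m<..m + (card A - 1) * R} \<union> (+) (m + (card A - 1) * R) ` T"

lemma level_block_inter:
  "A \<subseteq> {1..m} \<Longrightarrow> T \<subseteq> {1..R} \<Longrightarrow> level_block m R A T \<inter> {1..m} = A"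
  unfolding level_block_def by auto

lemma level_block_lower: "{m<..m + (card A - 1) * R} \<subseteq> level_block m R A T"
  unfolding level_block_def by auto

lemma level_block_upper:
  assumes "A \<noteq> {}" "finite A" "T \<subseteq> {1..R}"
  shows "level_block m R A T \<subseteq> A \<union> {m<..m + card A * R}"
proof -
  have "(card A - 1) * R + R = card A * R"
    using assms(1,2) by (cases "card A") auto
  then show ?thesis
    using assms(3) unfolding level_block_def by auto
qed

lemma Un_first_blocks_subset:
  assumes "A \<subseteq> {1..m}"
  shows "A \<union> {m<..m + card A * R} \<subseteq> {1..m * R + m}"
proof -
  have "card A \<le> m"
    using card_mono[OF _ assms] by simp
  then have bound: "m + card A * R \<le> m * R + m" by simp
  show ?thesis
    using assms by (auto intro: order_trans[OF _ bound])
qed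

lemma order_embedding_level_block:
  assumes "A \<subseteq> {1..m}" "A \<noteq> {}"
  shows "order_embedding (Bool_lat R) (Bool_lat (m * R + m)) (level_block m R A)"
  unfolding order_embedding_def
proof (intro conjI image_subsetI ballI)
  have "finite A" using assms(1) finite_subset by blast
  fix T T'
  assume T: "T \<in> Bool_lat R"
  then have "level_block m R A T \<subseteq> A \<union> {m<..m + card A * R}"
    using level_block_upper[OF assms(2) \<open>finite A\<close>] by (simp add: Bool_lat_def)
  also have "\<dots> \<subseteq> {1..m * R + m}"
    by (rule Un_first_blocks_subset[OF assms(1)])
  finally show "level_block m R A T \<in> Bool_lat (m * R + m)" by (simp add: Bool_lat_def)
  assume "T' \<in> Bool_lat R"
  let ?s = "m + (card A - 1) * R"
  have "T \<subseteq> T' \<longleftrightarrow> (+) ?s ` T \<subseteq> (+) ?s ` T'"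
    by (simp add: inj_image_subset_iff)
  also have "\<dots> \<longleftrightarrow> level_block m R A T \<subseteq> level_block m R A T'"
  proof -
    have base: "A \<union> {m<..?s} \<subseteq> {..?s}"
      using assms(1) by auto
    have "(+) ?s ` T \<inter> {..?s} = {}" "(+) ?s ` T' \<inter> {..?s} = {}"
      using T \<open>T' \<in> Bool_lat R\<close> by (auto simp: Bool_lat_def)
    then show ?thesis
      unfolding level_block_def using Un_subset_Un_disjoint_iff[OF base base] by simp
  qed
  finally show "level_block m R A T \<subseteq> level_block m R A T' \<longleftrightarrow> T \<subseteq> T'" by simp
qed

lemma order_embedding_of_levels:
  assumes inter: "\<And>A. A \<subseteq> {1..m} \<Longrightarrow> f A \<inter> {1..m} = A"
    and lower: "\<And>A. A \<subseteq> {1..m} \<Longrightarrow> {m<..m + (card A - 1) * R} \<subseteq> f A"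
    and upper: "\<And>A. A \<subseteq> {1..m} \<Longrightarrow> f A \<subseteq> A \<union> {m<..m + card A * R}"
  shows "order_embedding (Bool_lat m) (Bool_lat (m * R + m)) f"
  unfolding order_embedding_def
proof (intro conjI image_subsetI ballI)
  fix A B
  assume "A \<in> Bool_lat m"
  then have A: "A \<subseteq> {1..m}" by (simp add: Bool_lat_def)
  show "f A \<in> Bool_lat (m * R + m)"
    using order_trans[OF upper[OF A] Un_first_blocks_subset[OF A]] by (simp add: Bool_lat_def)
  assume "B \<in> Bool_lat m"
  then have B: "B \<subseteq> {1..m}" by (simp add: Bool_lat_def)
  show "f A \<subseteq> f B \<longleftrightarrow> A \<subseteq> B"
  proof
    assume "f A \<subseteq> f B"
    then show "A \<subseteq> B"
      using inter[OF A] inter[OF B] by blast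
  next
    assume "A \<subseteq> B"
    show "f A \<subseteq> f B"
    proof (cases "A = B")
      case False
      with \<open>A \<subseteq> B\<close> have "card A < card B"
        using B by (intro psubset_card_mono) (auto simp: finite_subset)
      then have bound: "m + card A * R \<le> m + (card B - 1) * R"
        by (intro add_left_mono mult_le_mono1) linarith
      have "{m<..m + card A * R} \<subseteq> {m<..m + (card B - 1) * R}"
      proof
        fix x
        assume "x \<in> {m<..m + card A * R}"
        then have "m < x" "x \<le> m + card A * R" by simp_all
        then show "x \<in> {m<..m + (card B - 1) * R}"
          using le_trans[OF _ bound] by simp
      qed
      then show ?thesis
        using upper[OF A] lower[OF B] inter[OF B] \<open>A \<subseteq> B\<close> by blast
    qed simp
  qed
qed

lemma order_embedding_level_block_choice:
  assumes "f {} = {}"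
    and choice: "\<And>A. A \<subseteq> {1..m} \<Longrightarrow> A \<noteq> {} \<Longrightarrow> f A \<in> level_block m R A ` Bool_lat R"
  shows "order_embedding (Bool_lat m) (Bool_lat (m * R + m)) f"
proof -
  have "f A \<inter> {1..m} = A \<and> {m<..m + (card A - 1) * R} \<subseteq> f A \<and>
      f A \<subseteq> A \<union> {m<..m + card A * R}" if A: "A \<subseteq> {1..m}" for A
  proof (cases "A = {}")
    case True
    then show ?thesis using assms(1) by simp
  next
    case False
    then obtain T where T: "T \<subseteq> {1..R}" and f_A: "f A = level_block m R A T"
      using choice[OF A] by (auto simp: Bool_lat_def)
    have "finite A" using A finite_subset by blast
    then show ?thesis
      using level_block_inter[OF A T] level_block_lower level_block_upper[OF False _ T] f_A by simp
  qed
  then show ?thesis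
    by (intro order_embedding_of_levels) simp_all
qed

lemma Bool_lat_arrows_card_colours:
  fixes c :: "nat set \<Rightarrow> 'c"
  assumes arrows: "Bool_lat_arrows k n R" and e: "order_embedding (Bool_lat R) Q e"
    and no_mono: "\<nexists>F. induced_copy (Bool_lat n) Q F \<and> monochromatic c F"
  shows "k < card (c ` e ` Bool_lat R)"
proof (rule ccontr)
  let ?colours = "c ` e ` Bool_lat R"
  assume "\<not> k < card ?colours"
  have "finite ?colours" by (simp add: Bool_lat_def)
  then obtain h where h: "bij_betw h ?colours {..<card ?colours}"
    using ex_bij_betw_finite_nat by (metis lessThan_atLeast0)
  have "h (c (e T)) < k" if "T \<in> Bool_lat R" for T
    using bij_betwE[OF h] that \<open>\<not> k < card ?colours\<close> by fastforce
  then obtain g where g: "order_embedding (Bool_lat n) (Bool_lat R) g"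
    and mono: "monochromatic (\<lambda>T. h (c (e T))) (g ` Bool_lat n)"
    using arrows[unfolded Bool_lat_arrows_def, rule_format, of "\<lambda>T. h (c (e T))"] by blast
  have "monochromatic c (e ` g ` Bool_lat n)"
  proof -
    obtain d where d: "\<forall>X\<in>Bool_lat n. h (c (e (g X))) = d"
      using mono unfolding monochromatic_def by auto
    have "c (e (g X)) = c (e (g Y))" if "X \<in> Bool_lat n" "Y \<in> Bool_lat n" for X Y
    proof -
      have "g X \<in> Bool_lat R" "g Y \<in> Bool_lat R"
        using g that unfolding order_embedding_def by auto
      then have "c (e (g X)) \<in> ?colours" "c (e (g Y)) \<in> ?colours" by auto
      moreover have "h (c (e (g X))) = h (c (e (g Y)))"
        using d that by simp
      ultimately show ?thesis
        using bij_betw_imp_inj_on[OF h] unfolding inj_on_def by blast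
    qed
    then show ?thesis
      unfolding monochromatic_def by blast
  qed
  moreover have "induced_copy (Bool_lat n) Q (e ` g ` Bool_lat n)"
    using order_embedding_comp[OF g e] unfolding induced_copy_iff by (auto simp: image_comp)
  ultimately show False using no_mono by blast
qed

lemma rainbow_or_monochromatic:
  fixes c :: "nat set \<Rightarrow> nat"
  assumes arrows: "Bool_lat_arrows (2 ^ m - 1) n R"
  shows "(\<exists>F. induced_copy (Bool_lat m) (Bool_lat (m * R + m)) F \<and> rainbow c F) \<or>
         (\<exists>F. induced_copy (Bool_lat n) (Bool_lat (m * R + m)) F \<and> monochromatic c F)"
proof (rule disjCI)
  assume no_mono: "\<nexists>F. induced_copy (Bool_lat n) (Bool_lat (m * R + m)) F \<and> monochromatic c F"
  define I where "I = Bool_lat m - {{}}"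
  have I_iff: "A \<in> I \<longleftrightarrow> A \<subseteq> {1..m} \<and> A \<noteq> {}" for A
    unfolding I_def Bool_lat_def by auto
  have "finite I" "card I = 2 ^ m - 1"
    unfolding I_def Bool_lat_def by (simp_all add: card_Pow)
  have enough_colours: "card {c {}} + card I \<le> card (c ` level_block m R A ` Bool_lat R)"
    if "A \<in> I" for A
  proof -
    from that have "A \<subseteq> {1..m}" "A \<noteq> {}" by (simp_all add: I_iff)
    then have "order_embedding (Bool_lat R) (Bool_lat (m * R + m)) (level_block m R A)"
      by (rule order_embedding_level_block)
    then have "2 ^ m - 1 < card (c ` level_block m R A ` Bool_lat R)"
      by (rule Bool_lat_arrows_card_colours[OF arrows _ no_mono])
    then show ?thesis using \<open>card I = 2 ^ m - 1\<close> by simp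
  qed
  have "\<exists>g. (\<forall>A\<in>I. g A \<in> level_block m R A ` Bool_lat R \<and> c (g A) \<notin> {c {}}) \<and>
      inj_on (c \<circ> g) I"
    by (rule exists_rainbow_choice[OF \<open>finite I\<close> _ enough_colours]) simp
  then obtain g where g: "\<forall>A\<in>I. g A \<in> level_block m R A ` Bool_lat R \<and> c (g A) \<noteq> c {}"
    and inj: "inj_on (c \<circ> g) I"
    by auto
  define f where "f A = (if A = {} then {} else g A)" for A
  have "f {} = {}" by (simp add: f_def)
  have f_I: "f A = g A" if "A \<in> I" for A
    using that I_iff unfolding f_def by simp
  have "order_embedding (Bool_lat m) (Bool_lat (m * R + m)) f"
  proof (rule order_embedding_level_block_choice)
    show "f {} = {}" by fact
    show "f A \<in> level_block m R A ` Bool_lat R" if "A \<subseteq> {1..m}" "A \<noteq> {}" for A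
      using that g f_I I_iff by simp
  qed
  moreover have "inj_on (c \<circ> f) (Bool_lat m)"
  proof -
    have "inj_on (c \<circ> f) I"
      using inj inj_on_cong[of I "c \<circ> f" "c \<circ> g"] f_I by simp
    moreover have "c (f {}) \<notin> (c \<circ> f) ` I"
      using g f_I \<open>f {} = {}\<close> by auto
    moreover have "Bool_lat m = insert {} I" "{} \<notin> I"
      unfolding I_def Bool_lat_def by auto
    ultimately show ?thesis by simp
  qed
  then have "rainbow c (f ` Bool_lat m)"
    unfolding rainbow_def by (rule inj_on_imageI)
  ultimately show "\<exists>F. induced_copy (Bool_lat m) (Bool_lat (m * R + m)) F \<and> rainbow c F"
    unfolding induced_copy_iff by blast
qed

theorem theorem1p5:
  fixes m n :: nat
  assumes "m > 0" and "n > 0"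
  shows "rainbow_Ramsey_num (Bool_lat m) (Bool_lat n)
           \<le> m * Ramsey_num (2 ^ m - 1) (Bool_lat n) + m"
  unfolding rainbow_Ramsey_num_def
  by (intro Least_le allI) (rule rainbow_or_monochromatic[OF Bool_lat_arrows_Ramsey_num])

end
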